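(* Let $(z,x)$ be a feasible solution of the cluster LP on a finite vertex set $V$. For $u,v,w\in V$ define $y_{uv}=\sum_{S\supseteq\{u,v\}}z_S$ and $y_{uvw}=\sum_{S\supseteq\{u,v,w\}}z_S$. Then for any three distinct vertices $u,v,w$, $$3y_{uvw}\le y_{uv}+y_{uw}+y_{vw}\le\tfrac32+\tfrac32 y_{uvw}.$$
   Context: The cluster LP for a finite vertex set $V$ has a variable $z_S$ for every nonempty $S\subseteq V$ and $x_{uv}$ for every unordered pair $uv$ of distinct vertices, with constraints $\sum_{S\ni u}z_S=1$ for all $u\in V$, $\sum_{S\supseteq\{u,v\}}z_S=1-x_{uv}$ for all $uv$, and $z_S\ge0$. *)

theory Defs
  imports Main Complex_Main
begin

definition cluster_LP_feasible :: "'a set \<Rightarrow> ('a set \<Rightarrow> real) \<Rightarrow> ('a set \<Rightarrow> real) \<Rightarrow> bool" where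
  "cluster_LP_feasible V z x \<longleftrightarrow>
     finite V \<and>
     (\<forall>S. S \<subseteq> V \<and> S \<noteq> {} \<longrightarrow> z S \<ge> 0) \<and>
     (\<forall>u\<in>V. (\<Sum>S\<in>{S. S \<subseteq> V \<and> S \<noteq> {} \<and> u \<in> S}. z S) = 1) \<and>
     (\<forall>u\<in>V. \<forall>v\<in>V. u \<noteq> v \<longrightarrow>
        (\<Sum>S\<in>{S. S \<subseteq> V \<and> {u, v} \<subseteq> S}. z S) = 1 - x {u, v})"

definition y_of :: "'a set \<Rightarrow> ('a set \<Rightarrow> real) \<Rightarrow> 'a set \<Rightarrow> real" where
  "y_of V z T = (\<Sum>S\<in>{S. S \<subseteq> V \<and> T \<subseteq> S}. z S)"

end

theory Submission
  imports Defs
begin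

text \<open>Each cluster S contributes z S \<ge> 0 to y T exactly when T \<subseteq> S. If k of the vertices
  u, v, w lie in S, the cluster contributes 3 [k = 3] to the left side, k(k-1)/2 to the pair sum
  and k/2 + 3/2 [k = 3] to the right side, where the singleton terms add up to 3/2 over all
  clusters by the vertex constraints; the three quantities are ordered for every k \<le> 3.\<close>

lemma y_of_eq_sum_indicator:
  assumes "finite V" "T \<noteq> {}"
  shows "y_of V z T = (\<Sum>S\<in>Pow V - {{}}. of_bool (T \<subseteq> S) * z S)"
proof -
  have "{S. S \<subseteq> V \<and> T \<subseteq> S} = (Pow V - {{}}) \<inter> {S. T \<subseteq> S}"
    using assms(2) by auto
  then show ?thesis
    unfolding y_of_def using assms(1) by (simp add: sum.inter_restrict)
qed

lemma cluster_LP_feasible_y_of_singleton: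
  assumes "cluster_LP_feasible V z x" "u \<in> V"
  shows "y_of V z {u} = 1"
proof -
  have "{S. S \<subseteq> V \<and> {u} \<subseteq> S} = {S. S \<subseteq> V \<and> S \<noteq> {} \<and> u \<in> S}" by auto
  then show ?thesis
    using assms unfolding y_of_def cluster_LP_feasible_def by simp
qed

lemma triple_indicator_le_pair_indicators:
  "3 * of_bool ({u, v, w} \<subseteq> S)
     \<le> (of_bool ({u, v} \<subseteq> S) + of_bool ({u, w} \<subseteq> S) + of_bool ({v, w} \<subseteq> S) :: real)"
  by auto

lemma pair_indicators_le_singleton_triple_indicators:
  "of_bool ({u, v} \<subseteq> S) + of_bool ({u, w} \<subseteq> S) + of_bool ({v, w} \<subseteq> S)
     \<le> (of_bool ({u} \<subseteq> S) + of_bool ({v} \<subseteq> S) + of_bool ({w} \<subseteq> S)) / 2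
       + 3/2 * (of_bool ({u, v, w} \<subseteq> S) :: real)"
  by auto

lemma y_of_triple_le_pairs:
  assumes "finite V" and nonneg: "\<And>S. S \<in> Pow V - {{}} \<Longrightarrow> z S \<ge> 0"
  shows "3 * y_of V z {u, v, w} \<le> y_of V z {u, v} + y_of V z {u, w} + y_of V z {v, w}"
proof -
  let ?F = "Pow V - {{}}"
  note y = y_of_eq_sum_indicator[OF \<open>finite V\<close>]
  have "3 * y_of V z {u, v, w} = (\<Sum>S\<in>?F. (3 * of_bool ({u, v, w} \<subseteq> S)) * z S)"
    by (simp add: y sum_distrib_left mult.assoc)
  also have "\<dots> \<le> (\<Sum>S\<in>?F.
      (of_bool ({u, v} \<subseteq> S) + of_bool ({u, w} \<subseteq> S) + of_bool ({v, w} \<subseteq> S)) * z S)"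
    using nonneg triple_indicator_le_pair_indicators by (intro sum_mono mult_right_mono)
  also have "\<dots> = y_of V z {u, v} + y_of V z {u, w} + y_of V z {v, w}"
    by (simp add: y distrib_right sum.distrib)
  finally show ?thesis .
qed

lemma y_of_pairs_le:
  assumes "finite V" and nonneg: "\<And>S. S \<in> Pow V - {{}} \<Longrightarrow> z S \<ge> 0"
  shows "y_of V z {u, v} + y_of V z {u, w} + y_of V z {v, w}
    \<le> (y_of V z {u} + y_of V z {v} + y_of V z {w}) / 2 + 3/2 * y_of V z {u, v, w}"
proof -
  let ?F = "Pow V - {{}}"
  note y = y_of_eq_sum_indicator[OF \<open>finite V\<close>]
  have "y_of V z {u, v} + y_of V z {u, w} + y_of V z {v, w} = (\<Sum>S\<in>?F.
      (of_bool ({u, v} \<subseteq> S) + of_bool ({u, w} \<subseteq> S) + of_bool ({v, w} \<subseteq> S)) * z S)"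
    by (simp add: y distrib_right sum.distrib)
  also have "\<dots> \<le> (\<Sum>S\<in>?F. ((of_bool ({u} \<subseteq> S) + of_bool ({v} \<subseteq> S) + of_bool ({w} \<subseteq> S)) / 2
      + 3/2 * of_bool ({u, v, w} \<subseteq> S)) * z S)"
    using nonneg pair_indicators_le_singleton_triple_indicators by (intro sum_mono mult_right_mono)
  also have "\<dots> = (y_of V z {u} + y_of V z {v} + y_of V z {w}) / 2 + 3/2 * y_of V z {u, v, w}"
    by (simp add: y distrib_right add_divide_distrib sum.distrib sum_divide_distrib
        sum_distrib_left mult.assoc)
  finally show ?thesis .
qed

theorem lemma17:
  fixes V :: "'a set" and z x :: "'a set \<Rightarrow> real" and u v w :: 'a
  assumes "cluster_LP_feasible V z x"
    and "u \<in> V" "v \<in> V" "w \<in> V"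
    and "u \<noteq> v" "u \<noteq> w" "v \<noteq> w"
  shows "3 * y_of V z {u, v, w} \<le> y_of V z {u, v} + y_of V z {u, w} + y_of V z {v, w}
    \<and> y_of V z {u, v} + y_of V z {u, w} + y_of V z {v, w} \<le> 3/2 + 3/2 * y_of V z {u, v, w}"
proof -
  have "finite V" and nonneg: "\<And>S. S \<in> Pow V - {{}} \<Longrightarrow> z S \<ge> 0"
    using assms(1) unfolding cluster_LP_feasible_def by auto
  have "3 * y_of V z {u, v, w} \<le> y_of V z {u, v} + y_of V z {u, w} + y_of V z {v, w}"
    using \<open>finite V\<close> nonneg by (rule y_of_triple_le_pairs)
  moreover have "y_of V z {u, v} + y_of V z {u, w} + y_of V z {v, w}
      \<le> (y_of V z {u} + y_of V z {v} + y_of V z {w}) / 2 + 3/2 * y_of V z {u, v, w}"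
    using \<open>finite V\<close> nonneg by (rule y_of_pairs_le)
  moreover have "y_of V z {u} + y_of V z {v} + y_of V z {w} = 3"
    using assms(2-4) cluster_LP_feasible_y_of_singleton[OF assms(1)] by simp
  ultimately show ?thesis
    by simp
qed

end
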